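(* Let $X,Y$ be compact Polish spaces, $Z=X\times Y$, $\mu,\nu$ Borel probability measures on $X$ and $Y$, let $(W,d_W,\omega)$ be a metric measure space and $S:Z\times W\to\mathbb{R}$ continuous. For $\pi\in\Pi(\mu,\nu)$ let $S_\pi(w)=\int_Z S(z,w)\,d\pi(z)$. Then \[ \inf_{\pi\in\Pi(\mu,\nu)}\ \sup_{\|f\|_{L^2(\omega)}\le 1}\langle S_\pi,f\rangle_{L^2(\omega)}=\sup_{\|f\|_{L^2(\omega)}\le 1}\ \inf_{\pi\in\Pi(\mu,\nu)}\langle S_\pi,f\rangle_{L^2(\omega)}. \]
   Context: $\Pi(\mu,\nu)$ denotes the set of Borel probability measures on $X\times Y$ with marginals $\mu$ and $\nu$; $\langle\cdot,\cdot\rangle_{L^2(\omega)}$ is the $L^2(\omega)$ inner product. *)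

theory Defs
  imports "HOL-Analysis.Analysis" "HOL-Probability.Probability"
begin

definition couplings :: "'x::topological_space measure \<Rightarrow> 'y::topological_space measure \<Rightarrow> ('x \<times> 'y) measure set" where
  "couplings \<mu> \<nu> = {\<pi>. prob_space \<pi> \<and> sets \<pi> = sets borel \<and>
      distr \<pi> borel fst = \<mu> \<and> distr \<pi> borel snd = \<nu>}"

definition L2_unit_ball :: "'w measure \<Rightarrow> ('w \<Rightarrow> real) set" where
  "L2_unit_ball \<omega> = {f. f \<in> borel_measurable \<omega> \<and> integrable \<omega> (\<lambda>w. (f w)\<^sup>2) \<and>
      (\<integral>w. (f w)\<^sup>2 \<partial>\<omega>) \<le> 1}"

definition L2_inner :: "'w measure \<Rightarrow> ('w \<Rightarrow> real) \<Rightarrow> ('w \<Rightarrow> real) \<Rightarrow> real" where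
  "L2_inner \<omega> g f = (\<integral>w. g w * f w \<partial>\<omega>)"

definition S_pi :: "('z \<Rightarrow> 'w \<Rightarrow> real) \<Rightarrow> 'z measure \<Rightarrow> 'w \<Rightarrow> real" where
  "S_pi S \<pi> w = (\<integral>z. S z w \<partial>\<pi>)"

end

theory Submission
  imports Defs
begin

text \<open>For square-integrable g the supremum of \<open>\<langle>g, f\<rangle>\<close> over the unit ball of \<open>L\<^sup>2(\<omega>)\<close> is
  \<open>\<parallel>g\<parallel>\<close>, so the left-hand side is the infimum of the norms of the elements of
  \<open>K = {S\<^sub>\<pi> | \<pi> \<in> \<Pi>(\<mu>, \<nu>)}\<close>. Mixing two couplings with a biased coin shows that K is convex,
  and \<open>\<pi> \<mapsto> S\<^sub>\<pi>\<close> is affine. By the parallelogram law a minimising sequence in K is Cauchy, so by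
  completeness of \<open>L\<^sup>2\<close> it converges to some p of minimal norm. Minimality of p along the segments
  towards points h of K gives \<open>\<langle>h, p\<rangle> \<ge> \<parallel>p\<parallel>\<^sup>2\<close>, hence the unit vector \<open>f = p / \<parallel>p\<parallel>\<close> satisfies
  \<open>\<langle>S\<^sub>\<pi>, f\<rangle> \<ge> \<parallel>p\<parallel>\<close> for every coupling \<pi>. This is the non-trivial half of the minimax equality.\<close>

section \<open>Square-integrable functions\<close>

definition square_integrable :: "'a measure \<Rightarrow> ('a \<Rightarrow> real) \<Rightarrow> bool" where
  "square_integrable M u \<longleftrightarrow> u \<in> borel_measurable M \<and> integrable M (\<lambda>x. (u x)\<^sup>2)"

definition L2_sqnorm :: "'a measure \<Rightarrow> ('a \<Rightarrow> real) \<Rightarrow> real" where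
  "L2_sqnorm M u = (\<integral>x. (u x)\<^sup>2 \<partial>M)"

lemma integrable_mult_square_integrable:
  assumes "square_integrable M u" "square_integrable M v"
  shows "integrable M (\<lambda>x. u x * v x)"
proof (rule Bochner_Integration.integrable_bound)
  show "integrable M (\<lambda>x. (u x)\<^sup>2 + (v x)\<^sup>2)"
    using assms by (auto simp: square_integrable_def)
  show "(\<lambda>x. u x * v x) \<in> borel_measurable M"
    using assms by (auto simp: square_integrable_def)
  have "\<bar>a * b\<bar> \<le> a\<^sup>2 + b\<^sup>2" for a b :: real
    using sum_squares_bound[of "\<bar>a\<bar>" "\<bar>b\<bar>"] mult_nonneg_nonneg[OF abs_ge_zero abs_ge_zero, of a b]
    unfolding abs_mult power2_abs by linarith
  then show "AE x in M. norm (u x * v x) \<le> norm ((u x)\<^sup>2 + (v x)\<^sup>2)"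
    by simp
qed

lemma square_integrable_lincomb:
  assumes "square_integrable M u" "square_integrable M v"
  shows "square_integrable M (\<lambda>x. a * u x + b * v x)"
proof -
  have "(\<lambda>x. (a * u x + b * v x)\<^sup>2) = (\<lambda>x. a\<^sup>2 * (u x)\<^sup>2 + (2 * a * b) * (u x * v x) + b\<^sup>2 * (v x)\<^sup>2)"
    by (simp add: power2_eq_square algebra_simps)
  then show ?thesis
    using assms integrable_mult_square_integrable[OF assms] by (auto simp: square_integrable_def)
qed

lemma square_integrable_diff:
  assumes "square_integrable M u" "square_integrable M v"
  shows "square_integrable M (\<lambda>x. u x - v x)"
  using square_integrable_lincomb[OF assms, where a=1 and b="-1"] by simp

lemma square_integrable_mult:
  assumes "square_integrable M u"
  shows "square_integrable M (\<lambda>x. c * u x)"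
  using assms by (auto simp: square_integrable_def power_mult_distrib)

lemma L2_sqnorm_lincomb:
  assumes "square_integrable M u" "square_integrable M v"
  shows "L2_sqnorm M (\<lambda>x. a * u x + b * v x)
    = a\<^sup>2 * L2_sqnorm M u + 2 * a * b * L2_inner M u v + b\<^sup>2 * L2_sqnorm M v"
proof -
  have "(\<lambda>x. (a * u x + b * v x)\<^sup>2) = (\<lambda>x. a\<^sup>2 * (u x)\<^sup>2 + (2 * a * b) * (u x * v x) + b\<^sup>2 * (v x)\<^sup>2)"
    by (simp add: power2_eq_square algebra_simps)
  then show ?thesis
    using assms integrable_mult_square_integrable[OF assms]
    by (simp add: L2_sqnorm_def L2_inner_def square_integrable_def)
qed

lemma L2_sqnorm_mult: "L2_sqnorm M (\<lambda>x. c * u x) = c\<^sup>2 * L2_sqnorm M u"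
  by (simp add: L2_sqnorm_def power_mult_distrib)

lemma L2_sqnorm_nonneg: "0 \<le> L2_sqnorm M u"
  by (simp add: L2_sqnorm_def)

lemma L2_sqnorm_eq_inner: "L2_sqnorm M u = L2_inner M u u"
  by (simp add: L2_sqnorm_def L2_inner_def power2_eq_square)

lemma L2_inner_commute: "L2_inner M u v = L2_inner M v u"
  by (simp add: L2_inner_def mult.commute)

lemma L2_inner_mult_right: "L2_inner M u (\<lambda>x. c * v x) = c * L2_inner M u v"
  by (simp add: L2_inner_def mult.left_commute)

lemma L2_inner_square_le:
  assumes "square_integrable M u" "square_integrable M v"
  shows "(L2_inner M u v)\<^sup>2 \<le> L2_sqnorm M u * L2_sqnorm M v"
proof -
  let ?b = "L2_inner M u v"
  have quadratic: "0 \<le> L2_sqnorm M u - 2 * t * ?b + t\<^sup>2 * L2_sqnorm M v" for t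
    using L2_sqnorm_lincomb[OF assms, where a=1 and b="-t"] L2_sqnorm_nonneg[of M "\<lambda>x. u x - t * v x"] by simp
  show ?thesis
  proof (cases "L2_sqnorm M v = 0")
    case True
    have "?b = 0"
    proof (rule ccontr)
      assume "?b \<noteq> 0"
      then show False
        using quadratic[of "(L2_sqnorm M u + 1) / (2 * ?b)"] True by (simp add: field_simps)
    qed
    then show ?thesis by (simp add: L2_sqnorm_nonneg)
  next
    case False
    then have pos: "0 < L2_sqnorm M v" using L2_sqnorm_nonneg[of M v] by simp
    have "0 \<le> L2_sqnorm M u - 2 * (?b / L2_sqnorm M v) * ?b + (?b / L2_sqnorm M v)\<^sup>2 * L2_sqnorm M v"
      by (rule quadratic)
    also have "\<dots> = L2_sqnorm M u - ?b\<^sup>2 / L2_sqnorm M v"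
      using pos by (simp add: field_simps power2_eq_square)
    finally show ?thesis using pos by (simp add: field_simps)
  qed
qed

lemma abs_L2_inner_le:
  assumes "square_integrable M u" "square_integrable M v"
  shows "\<bar>L2_inner M u v\<bar> \<le> sqrt (L2_sqnorm M u) * sqrt (L2_sqnorm M v)"
  using real_sqrt_le_mono[OF L2_inner_square_le[OF assms]] by (simp add: real_sqrt_mult)

lemma L2_sqnorm_tendsto:
  assumes p: "square_integrable M p" and u: "\<And>n. square_integrable M (u n)"
    and lim: "(\<lambda>n. L2_sqnorm M (\<lambda>x. u n x - p x)) \<longlonglongrightarrow> 0"
  shows "(\<lambda>n. L2_sqnorm M (u n)) \<longlonglongrightarrow> L2_sqnorm M p"
proof -
  define d where "d n = (\<lambda>x. u n x - p x)" for n
  have d: "square_integrable M (d n)" for n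
    unfolding d_def by (rule square_integrable_diff[OF u p])
  have expand: "L2_sqnorm M (u n) = L2_sqnorm M p + 2 * L2_inner M p (d n) + L2_sqnorm M (d n)" for n
    using L2_sqnorm_lincomb[OF p d, where a=1 and b=1] by (simp add: d_def)
  have "(\<lambda>n. L2_inner M p (d n)) \<longlonglongrightarrow> 0"
  proof (rule Lim_null_comparison)
    show "\<forall>\<^sub>F n in sequentially. norm (L2_inner M p (d n)) \<le> sqrt (L2_sqnorm M p) * sqrt (L2_sqnorm M (d n))"
      using abs_L2_inner_le[OF p d] by simp
    have "(\<lambda>n. sqrt (L2_sqnorm M p) * sqrt (L2_sqnorm M (d n))) \<longlonglongrightarrow> sqrt (L2_sqnorm M p) * sqrt 0"
      using lim unfolding d_def by (intro tendsto_mult tendsto_const tendsto_real_sqrt)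
    then show "(\<lambda>n. sqrt (L2_sqnorm M p) * sqrt (L2_sqnorm M (d n))) \<longlonglongrightarrow> 0"
      by simp
  qed
  then have "(\<lambda>n. L2_sqnorm M p + 2 * L2_inner M p (d n) + L2_sqnorm M (d n)) \<longlonglongrightarrow> L2_sqnorm M p + 2 * 0 + 0"
    using lim unfolding d_def by (intro tendsto_add tendsto_mult tendsto_const)
  then show ?thesis by (simp add: expand)
qed

lemma L2_unit_ball_iff: "f \<in> L2_unit_ball M \<longleftrightarrow> square_integrable M f \<and> L2_sqnorm M f \<le> 1"
  by (auto simp: L2_unit_ball_def square_integrable_def L2_sqnorm_def)

lemma inner_normalized_in_L2_unit_ball:
  assumes g: "square_integrable M g"
  defines "f \<equiv> \<lambda>x. (1 / sqrt (L2_sqnorm M g)) * g x"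
    \<comment> \<open>the zero function if \<open>\<parallel>g\<parallel> = 0\<close>, as \<open>1 / 0 = 0\<close>\<close>
  shows "f \<in> L2_unit_ball M" and "L2_inner M h f = L2_inner M h g / sqrt (L2_sqnorm M g)"
proof -
  have "square_integrable M f"
    unfolding f_def by (rule square_integrable_mult[OF g])
  moreover have "L2_sqnorm M f \<le> 1"
    unfolding f_def L2_sqnorm_mult using L2_sqnorm_nonneg[of M g] by (simp add: power_divide)
  ultimately show "f \<in> L2_unit_ball M" by (simp add: L2_unit_ball_iff)
  show "L2_inner M h f = L2_inner M h g / sqrt (L2_sqnorm M g)"
    unfolding f_def L2_inner_mult_right by simp
qed

lemma SUP_L2_unit_ball_inner:
  assumes g: "square_integrable M g"
  shows "(SUP f\<in>L2_unit_ball M. ereal (L2_inner M g f)) = ereal (sqrt (L2_sqnorm M g))"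
proof (rule antisym)
  show "(SUP f\<in>L2_unit_ball M. ereal (L2_inner M g f)) \<le> ereal (sqrt (L2_sqnorm M g))"
  proof (rule SUP_least)
    fix f assume "f \<in> L2_unit_ball M"
    then have f: "square_integrable M f" "L2_sqnorm M f \<le> 1" by (auto simp: L2_unit_ball_iff)
    have "L2_inner M g f \<le> sqrt (L2_sqnorm M g) * sqrt (L2_sqnorm M f)"
      using abs_L2_inner_le[OF g f(1)] by linarith
    also have "\<dots> \<le> sqrt (L2_sqnorm M g)"
      using f(2) by (intro mult_left_le) (auto simp: L2_sqnorm_nonneg)
    finally show "ereal (L2_inner M g f) \<le> ereal (sqrt (L2_sqnorm M g))" by simp
  qed
next
  have "L2_inner M g g / sqrt (L2_sqnorm M g) = sqrt (L2_sqnorm M g)"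
    using L2_sqnorm_nonneg[of M g] by (simp add: L2_sqnorm_eq_inner[symmetric] real_div_sqrt)
  then show "ereal (sqrt (L2_sqnorm M g)) \<le> (SUP f\<in>L2_unit_ball M. ereal (L2_inner M g f))"
    using inner_normalized_in_L2_unit_ball[OF g] by (metis SUP_upper)
qed

section \<open>Completeness\<close>

lemma AE_convergent_if_L2_fast_Cauchy:
  assumes u: "\<And>n. square_integrable M (u n)"
    and step: "\<And>n. L2_sqnorm M (\<lambda>x. u (Suc n) x - u n x) \<le> (1/4)^n"
  shows "AE x in M. convergent (\<lambda>n. u n x)"
proof -
  define h where "h n = (\<lambda>x. u (Suc n) x - u n x)" for n
  have h: "square_integrable M (h n)" for n
    unfolding h_def by (rule square_integrable_diff[OF u u])
  have [measurable]: "h n \<in> borel_measurable M" for n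
    using h by (simp add: square_integrable_def)
  \<comment> \<open>The weights \<open>2\<^sup>n\<close> keep \<open>\<integral>G\<close> finite and still dominate \<open>\<bar>h n x\<bar>\<close> by AM-GM.\<close>
  define G where "G x = (\<Sum>n. ennreal (2^n * (h n x)\<^sup>2))" for x
  have weighted: "(\<integral>\<^sup>+x. ennreal (2^n * (h n x)\<^sup>2) \<partial>M) \<le> ennreal ((1/2)^n)" for n
  proof -
    have "(\<integral>\<^sup>+x. ennreal (2^n * (h n x)\<^sup>2) \<partial>M) = ennreal (2^n * L2_sqnorm M (h n))"
      using h[of n] by (simp add: L2_sqnorm_def square_integrable_def nn_integral_eq_integral)
    also have "2^n * L2_sqnorm M (h n) \<le> 2^n * (1/4)^n"
      using step[of n] by (simp add: h_def)
    also have "(2::real)^n * (1/4)^n = (1/2)^n"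
      by (simp add: power_mult_distrib[symmetric])
    finally show ?thesis by (simp add: ennreal_leI)
  qed
  have "(\<integral>\<^sup>+x. G x \<partial>M) = (\<Sum>n. \<integral>\<^sup>+x. ennreal (2^n * (h n x)\<^sup>2) \<partial>M)"
    unfolding G_def by (rule nn_integral_suminf) measurable
  also have "\<dots> \<le> (\<Sum>n. ennreal ((1/2)^n))"
    by (intro suminf_le weighted) auto
  also have "\<dots> < \<top>"
    by (simp add: suminf_ennreal2 summable_geometric)
  finally have "(\<integral>\<^sup>+x. G x \<partial>M) \<noteq> \<infinity>"
    by simp
  moreover have "G \<in> borel_measurable M"
    unfolding G_def by measurable
  ultimately have "AE x in M. G x \<noteq> \<infinity>"
    by (rule nn_integral_noteq_infinite[rotated])
  then show ?thesis
  proof eventually_elim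
    case (elim x)
    then have "summable (\<lambda>n. 2^n * (h n x)\<^sup>2)"
      by (intro summable_suminf_not_top) (auto simp: G_def)
    then have "summable (\<lambda>n. (2^n * (h n x)\<^sup>2 + (1/2)^n) / 2)"
      by (intro summable_divide summable_add summable_geometric) simp_all
    moreover have "norm (h n x) \<le> (2^n * (h n x)\<^sup>2 + (1/2)^n) / 2" for n
    proof -
      have "2 * (2^n * \<bar>h n x\<bar>) \<le> (2^n * \<bar>h n x\<bar>)\<^sup>2 + 1"
        using sum_squares_bound[of "2^n * \<bar>h n x\<bar>" 1] by simp
      then show ?thesis
        by (simp add: field_simps power_mult_distrib power2_eq_square)
    qed
    ultimately have "summable (\<lambda>n. h n x)"
      by (rule summable_comparison_test')
    then have "convergent (\<lambda>n. u 0 x + (\<Sum>i<n. h i x))"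
      by (simp add: summable_iff_convergent convergent_add_const_iff)
    moreover have "u 0 x + (\<Sum>i<n. h i x) = u n x" for n
      by (induction n) (simp_all add: h_def)
    ultimately show ?case by simp
  qed
qed

lemma square_integrable_AE_limit:
  assumes u: "\<And>n. square_integrable M (u n)" and p[measurable]: "p \<in> borel_measurable M"
    and lim: "AE x in M. (\<lambda>n. u n x) \<longlonglongrightarrow> p x"
    and bound: "\<forall>\<^sub>F n in sequentially. L2_sqnorm M (u n) \<le> C"
  shows "square_integrable M p" and "L2_sqnorm M p \<le> C"
proof -
  have [measurable]: "u n \<in> borel_measurable M" for n
    using u by (simp add: square_integrable_def)
  have sqnorm_eq: "(\<integral>\<^sup>+x. ennreal ((u n x)\<^sup>2) \<partial>M) = ennreal (L2_sqnorm M (u n))" for n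
    using u[of n] by (simp add: L2_sqnorm_def square_integrable_def nn_integral_eq_integral)
  obtain N where "L2_sqnorm M (u N) \<le> C"
    using bound by (auto simp: eventually_sequentially)
  then have C: "0 \<le> C"
    using L2_sqnorm_nonneg order_trans by blast
  have "(\<integral>\<^sup>+x. ennreal ((p x)\<^sup>2) \<partial>M) = (\<integral>\<^sup>+x. liminf (\<lambda>n. ennreal ((u n x)\<^sup>2)) \<partial>M)"
    using lim
  proof (intro nn_integral_cong_AE, eventually_elim)
    case (elim x)
    have "(\<lambda>n. ennreal ((u n x)\<^sup>2)) \<longlonglongrightarrow> ennreal ((p x)\<^sup>2)"
      by (intro tendsto_ennrealI tendsto_power elim)
    then show ?case
      by (rule lim_imp_Liminf[symmetric, OF sequentially_bot])
  qed
  also have "\<dots> \<le> liminf (\<lambda>n. \<integral>\<^sup>+x. ennreal ((u n x)\<^sup>2) \<partial>M)"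
    by (rule nn_integral_liminf) measurable
  also have "\<dots> \<le> ennreal C"
    unfolding sqnorm_eq
    by (intro order_trans[OF Liminf_le_Limsup Limsup_bounded])
       (auto intro: eventually_mono[OF bound] ennreal_leI)
  finally have nn: "(\<integral>\<^sup>+x. ennreal ((p x)\<^sup>2) \<partial>M) \<le> ennreal C" .
  then have "integrable M (\<lambda>x. (p x)\<^sup>2)"
    by (intro integrableI_bounded) (auto intro: le_less_trans[OF _ ennreal_less_top])
  then show sq: "square_integrable M p"
    by (simp add: square_integrable_def)
  have "ennreal (L2_sqnorm M p) \<le> ennreal C"
    using nn sq by (simp add: L2_sqnorm_def square_integrable_def nn_integral_eq_integral)
  then show "L2_sqnorm M p \<le> C"
    using C by (simp add: ennreal_le_iff)
qed

lemma L2_fast_Cauchy_limit: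
  assumes u: "\<And>n. square_integrable M (u n)"
    and Cauchy: "\<And>m n. n \<le> m \<Longrightarrow> L2_sqnorm M (\<lambda>x. u m x - u n x) \<le> (1/4)^n"
  obtains p where "square_integrable M p" and "\<And>n. L2_sqnorm M (\<lambda>x. p x - u n x) \<le> (1/4)^n"
proof -
  have [measurable]: "u n \<in> borel_measurable M" for n
    using u by (simp add: square_integrable_def)
  define p where "p x = lim (\<lambda>n. u n x)" for x
  have [measurable]: "p \<in> borel_measurable M"
    unfolding p_def by measurable
  have "AE x in M. convergent (\<lambda>n. u n x)"
    using Cauchy by (intro AE_convergent_if_L2_fast_Cauchy[OF u]) simp
  then have lim: "AE x in M. (\<lambda>n. u n x) \<longlonglongrightarrow> p x"
    by eventually_elim (simp add: p_def convergent_LIMSEQ_iff)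
  have diff: "square_integrable M (\<lambda>x. p x - u n x)"
    and diff_bound: "L2_sqnorm M (\<lambda>x. p x - u n x) \<le> (1/4)^n" for n
  proof -
    have "AE x in M. (\<lambda>m. u m x - u n x) \<longlonglongrightarrow> p x - u n x"
      using lim by eventually_elim (intro tendsto_diff tendsto_const)
    moreover have "\<forall>\<^sub>F m in sequentially. L2_sqnorm M (\<lambda>x. u m x - u n x) \<le> (1/4)^n"
      using Cauchy by (auto simp: eventually_sequentially)
    moreover have "square_integrable M (\<lambda>x. u m x - u n x)" for m
      by (rule square_integrable_diff[OF u u])
    ultimately show "square_integrable M (\<lambda>x. p x - u n x)"
      and "L2_sqnorm M (\<lambda>x. p x - u n x) \<le> (1/4)^n"
      using square_integrable_AE_limit[where u="\<lambda>m x. u m x - u n x"] by auto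
  qed
  have "square_integrable M p"
    using square_integrable_lincomb[OF diff[of 0] u[of 0], where a=1 and b=1] by simp
  then show ?thesis
    using diff_bound by (rule that)
qed

section \<open>Points of minimal norm in convex sets\<close>

lemma le_of_quadratic_perturbation:
  fixes d x y :: real
  assumes "\<And>t. 0 < t \<Longrightarrow> t \<le> 1 \<Longrightarrow> d \<le> (1 - t)\<^sup>2 * d + 2 * (1 - t) * t * x + t\<^sup>2 * y"
  shows "d \<le> x"
proof (rule ccontr)
  assume "\<not> d \<le> x"
  define c where "c = d - 2 * x + y"
  have slope: "2 * (d - x) \<le> t * c" if "0 < t" "t \<le> 1" for t
  proof -
    have "0 \<le> t * (2 * (x - d) + t * c)"
      using assms[OF that] by (simp add: c_def power2_eq_square algebra_simps)
    then show ?thesis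
      using \<open>0 < t\<close> by (simp add: zero_le_mult_iff)
  qed
  show False
  proof (cases "c \<le> d - x")
    case True
    then show False using slope[of 1] \<open>\<not> d \<le> x\<close> by simp
  next
    case False
    then have "0 < (d - x) / c" "(d - x) / c \<le> 1"
      using \<open>\<not> d \<le> x\<close> by (auto simp: field_simps)
    then show False
      using slope[of "(d - x) / c"] False \<open>\<not> d \<le> x\<close> by simp
  qed
qed

locale L2_convex_set =
  fixes M :: "'a measure" and K :: "('a \<Rightarrow> real) set"
  assumes K_square_integrable: "g \<in> K \<Longrightarrow> square_integrable M g"
    and K_convex: "g \<in> K \<Longrightarrow> h \<in> K \<Longrightarrow> 0 \<le> t \<Longrightarrow> t \<le> 1 \<Longrightarrow> (\<lambda>x. t * g x + (1 - t) * h x) \<in> K"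
begin

abbreviation inf_sqnorm :: real where
  "inf_sqnorm \<equiv> INF g\<in>K. L2_sqnorm M g"

lemma bdd_below_sqnorm: "bdd_below (L2_sqnorm M ` K)"
  by (auto intro: bdd_belowI2 L2_sqnorm_nonneg)

lemma inf_sqnorm_le: "g \<in> K \<Longrightarrow> inf_sqnorm \<le> L2_sqnorm M g"
  by (rule cINF_lower[OF bdd_below_sqnorm])

lemma sqnorm_diff_of_near_minimizers:
  assumes g: "g \<in> K" and h: "h \<in> K"
    and "L2_sqnorm M g \<le> inf_sqnorm + a" and "L2_sqnorm M h \<le> inf_sqnorm + b"
  shows "L2_sqnorm M (\<lambda>x. g x - h x) \<le> 2 * a + 2 * b"
proof -
  note g' = K_square_integrable[OF g] and h' = K_square_integrable[OF h]
  have "inf_sqnorm \<le> L2_sqnorm M (\<lambda>x. (1/2) * g x + (1/2) * h x)"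
    using inf_sqnorm_le K_convex[OF g h, of "1/2"] by simp
  also have "\<dots> = (1/4) * L2_sqnorm M g + (1/2) * L2_inner M g h + (1/4) * L2_sqnorm M h"
    using L2_sqnorm_lincomb[OF g' h', where a="1/2" and b="1/2"] by (simp add: power2_eq_square)
  finally have midpoint: "inf_sqnorm \<le> \<dots>" .
  have "L2_sqnorm M (\<lambda>x. g x - h x) = L2_sqnorm M g - 2 * L2_inner M g h + L2_sqnorm M h"
    using L2_sqnorm_lincomb[OF g' h', where a=1 and b="-1"] by simp
  with midpoint assms(3,4) show ?thesis by linarith
qed

lemma min_norm_limit:
  assumes "K \<noteq> {}"
  obtains u p where "\<And>n. u n \<in> K" and "square_integrable M p" and "L2_sqnorm M p = inf_sqnorm"
    and "(\<lambda>n. L2_sqnorm M (\<lambda>x. u n x - p x)) \<longlonglongrightarrow> 0"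
proof -
  have "\<exists>g. g \<in> K \<and> L2_sqnorm M g < inf_sqnorm + (1/4)^n / 4" for n :: nat
    using cINF_less_iff[OF assms bdd_below_sqnorm, of "inf_sqnorm + (1/4)^n / 4"] by auto
  then obtain u where uK: "\<And>n. u n \<in> K" and u_near: "\<And>n. L2_sqnorm M (u n) < inf_sqnorm + (1/4)^n / 4"
    using choice[of "\<lambda>n g. g \<in> K \<and> L2_sqnorm M g < inf_sqnorm + (1/4)^n / 4"] by blast
  note u = K_square_integrable[OF uK]
  have Cauchy: "L2_sqnorm M (\<lambda>x. u m x - u n x) \<le> (1/4)^n" if "n \<le> m" for m n
  proof -
    have "(1/4::real)^m \<le> (1/4)^n"
      using that by (intro power_decreasing) auto
    then show ?thesis
      using sqnorm_diff_of_near_minimizers[OF uK uK less_imp_le[OF u_near[of m]] less_imp_le[OF u_near[of n]]]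
      by linarith
  qed
  obtain p where p: "square_integrable M p" and p_near: "\<And>n. L2_sqnorm M (\<lambda>x. p x - u n x) \<le> (1/4)^n"
    using L2_fast_Cauchy_limit[OF u Cauchy] by blast
  have "L2_sqnorm M (\<lambda>x. u n x - p x) = L2_sqnorm M (\<lambda>x. p x - u n x)" for n
    by (simp add: L2_sqnorm_def power2_commute)
  then have diff_lim: "(\<lambda>n. L2_sqnorm M (\<lambda>x. u n x - p x)) \<longlonglongrightarrow> 0"
    using p_near by (intro Lim_null_comparison[OF _ LIMSEQ_power_zero[of "1/4::real"]])
      (auto simp: L2_sqnorm_nonneg)
  have "(\<lambda>n. L2_sqnorm M (u n)) \<longlonglongrightarrow> L2_sqnorm M p"
    by (rule L2_sqnorm_tendsto[OF p u diff_lim])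
  moreover have "(\<lambda>n. L2_sqnorm M (u n)) \<longlonglongrightarrow> inf_sqnorm"
  proof (rule tendsto_sandwich[where f="\<lambda>_. inf_sqnorm" and h="\<lambda>n. inf_sqnorm + (1/4)^n / 4"])
    show "\<forall>\<^sub>F n in sequentially. inf_sqnorm \<le> L2_sqnorm M (u n)"
      using inf_sqnorm_le[OF uK] by simp
    show "\<forall>\<^sub>F n in sequentially. L2_sqnorm M (u n) \<le> inf_sqnorm + (1/4)^n / 4"
      using u_near by (simp add: less_imp_le)
    show "(\<lambda>n. inf_sqnorm + (1/4::real)^n / 4) \<longlonglongrightarrow> inf_sqnorm"
      using tendsto_add[OF tendsto_const tendsto_divide[OF LIMSEQ_power_zero[of "1/4::real"] tendsto_const]]
      by simp
  qed simp
  ultimately have "L2_sqnorm M p = inf_sqnorm"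
    by (rule LIMSEQ_unique)
  with uK p show ?thesis
    using diff_lim by (rule that)
qed

lemma min_norm_variational_inequality:
  assumes uK: "\<And>n. u n \<in> K" and p: "square_integrable M p" and p_min: "L2_sqnorm M p = inf_sqnorm"
    and lim: "(\<lambda>n. L2_sqnorm M (\<lambda>x. u n x - p x)) \<longlonglongrightarrow> 0"
    and h: "h \<in> K"
  shows "L2_sqnorm M p \<le> L2_inner M h p"
proof -
  note h' = K_square_integrable[OF h]
  have "inf_sqnorm \<le> (1 - t)\<^sup>2 * inf_sqnorm + 2 * (1 - t) * t * L2_inner M p h + t\<^sup>2 * L2_sqnorm M h"
    if t: "0 < t" "t \<le> 1" for t
  proof -
    define v where "v n = (\<lambda>x. (1 - t) * u n x + t * h x)" for n
    define q where "q = (\<lambda>x. (1 - t) * p x + t * h x)"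
    have vK: "v n \<in> K" for n
      using K_convex[OF uK h, of "1 - t"] t by (simp add: v_def)
    have "L2_sqnorm M (\<lambda>x. v n x - q x) = (1 - t)\<^sup>2 * L2_sqnorm M (\<lambda>x. u n x - p x)" for n
    proof -
      have "(\<lambda>x. v n x - q x) = (\<lambda>x. (1 - t) * (u n x - p x))"
        by (simp add: v_def q_def algebra_simps)
      then show ?thesis by (simp add: L2_sqnorm_mult)
    qed
    moreover have "(\<lambda>n. (1 - t)\<^sup>2 * L2_sqnorm M (\<lambda>x. u n x - p x)) \<longlonglongrightarrow> (1 - t)\<^sup>2 * 0"
      by (intro tendsto_mult tendsto_const lim)
    ultimately have "(\<lambda>n. L2_sqnorm M (\<lambda>x. v n x - q x)) \<longlonglongrightarrow> 0"
      by simp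
    then have "(\<lambda>n. L2_sqnorm M (v n)) \<longlonglongrightarrow> L2_sqnorm M q"
      using K_square_integrable[OF vK] square_integrable_lincomb[OF p h'] unfolding q_def
      by (intro L2_sqnorm_tendsto) auto
    then have "inf_sqnorm \<le> L2_sqnorm M q"
      using inf_sqnorm_le[OF vK] by (intro LIMSEQ_le_const) auto
    also have "L2_sqnorm M q = (1 - t)\<^sup>2 * inf_sqnorm + 2 * (1 - t) * t * L2_inner M p h + t\<^sup>2 * L2_sqnorm M h"
      unfolding q_def L2_sqnorm_lincomb[OF p h'] p_min ..
    finally show ?thesis .
  qed
  then have "inf_sqnorm \<le> L2_inner M p h"
    by (rule le_of_quadratic_perturbation)
  then show ?thesis
    by (simp add: p_min L2_inner_commute)
qed

lemma INF_SUP_eq_SUP_INF_L2_inner: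
  "(INF g\<in>K. SUP f\<in>L2_unit_ball M. ereal (L2_inner M g f))
     = (SUP f\<in>L2_unit_ball M. INF g\<in>K. ereal (L2_inner M g f))"
proof (rule antisym)
  show "(INF g\<in>K. SUP f\<in>L2_unit_ball M. ereal (L2_inner M g f))
      \<le> (SUP f\<in>L2_unit_ball M. INF g\<in>K. ereal (L2_inner M g f))"
  proof (cases "K = {}")
    case True
    have "(\<lambda>x. 0) \<in> L2_unit_ball M"
      by (simp add: L2_unit_ball_def)
    then have "L2_unit_ball M \<noteq> {}"
      by blast
    with True show ?thesis
      by simp
  next
    case False
    then obtain u p where uK: "\<And>n. u n \<in> K" and p: "square_integrable M p"
      and p_min: "L2_sqnorm M p = inf_sqnorm" and lim: "(\<lambda>n. L2_sqnorm M (\<lambda>x. u n x - p x)) \<longlonglongrightarrow> 0"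
      using min_norm_limit[OF False] by blast
    define f where "f = (\<lambda>x. (1 / sqrt (L2_sqnorm M p)) * p x)"
    have "(INF g\<in>K. SUP f\<in>L2_unit_ball M. ereal (L2_inner M g f)) = (INF g\<in>K. ereal (sqrt (L2_sqnorm M g)))"
      by (intro INF_cong refl SUP_L2_unit_ball_inner K_square_integrable)
    also have "\<dots> \<le> ereal (sqrt (L2_sqnorm M p))"
    proof (rule LIMSEQ_le_const)
      show "(\<lambda>n. ereal (sqrt (L2_sqnorm M (u n)))) \<longlonglongrightarrow> ereal (sqrt (L2_sqnorm M p))"
        unfolding lim_ereal
        by (intro tendsto_real_sqrt L2_sqnorm_tendsto[OF p K_square_integrable[OF uK] lim])
    qed (auto intro: INF_lower uK)
    also have "\<dots> \<le> (INF h\<in>K. ereal (L2_inner M h f))"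
    proof (rule INF_greatest)
      fix h assume "h \<in> K"
      have "sqrt (L2_sqnorm M p) = L2_sqnorm M p / sqrt (L2_sqnorm M p)"
        using L2_sqnorm_nonneg[of M p] by (simp add: real_div_sqrt)
      also have "\<dots> \<le> L2_inner M h p / sqrt (L2_sqnorm M p)"
        using min_norm_variational_inequality[OF uK p p_min lim \<open>h \<in> K\<close>]
        by (simp add: divide_right_mono L2_sqnorm_nonneg)
      also have "\<dots> = L2_inner M h f"
        using inner_normalized_in_L2_unit_ball(2)[OF p] by (simp add: f_def)
      finally show "ereal (sqrt (L2_sqnorm M p)) \<le> ereal (L2_inner M h f)" by simp
    qed
    also have "\<dots> \<le> (SUP f\<in>L2_unit_ball M. INF g\<in>K. ereal (L2_inner M g f))"
      using inner_normalized_in_L2_unit_ball(1)[OF p] by (auto simp: f_def intro: SUP_upper)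
    finally show ?thesis .
  qed
qed (intro SUP_least INF_mono' SUP_upper)

end

section \<open>Mixtures of probability measures\<close>

definition mix_measure :: "real \<Rightarrow> 'a measure \<Rightarrow> 'a measure \<Rightarrow> 'a measure" where
  "mix_measure t P Q = measure_pmf (bernoulli_pmf t) \<bind> (\<lambda>b. if b then P else Q)"

context
  fixes t :: real and P Q N :: "'a measure"
  assumes t: "0 \<le> t" "t \<le> 1"
    and P: "prob_space P" "sets P = sets N"
    and Q: "prob_space Q" "sets Q = sets N"
begin

lemma mix_measure_kernel:
  "(\<lambda>b. if b then P else Q) \<in> measure_pmf (bernoulli_pmf t) \<rightarrow>\<^sub>M subprob_algebra N"
proof -
  have "(\<lambda>b. if b then P else Q) \<in> count_space UNIV \<rightarrow>\<^sub>M subprob_algebra N"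
    using P Q by (auto simp: space_subprob_algebra prob_space_imp_subprob_space)
  then show ?thesis
    by (simp add: measurable_cong_sets[OF sets_measure_pmf_count_space refl])
qed

lemma sets_mix_measure: "sets (mix_measure t P Q) = sets N"
  unfolding mix_measure_def by (rule sets_bind) (auto simp: P Q)

lemma prob_space_mix_measure: "prob_space (mix_measure t P Q)"
  unfolding mix_measure_def
  by (rule prob_space.prob_space_bind[OF prob_space_measure_pmf _ mix_measure_kernel])
     (auto simp: P Q)

lemma integral_mix_measure:
  fixes f :: "'a \<Rightarrow> real"
  assumes "f \<in> borel_measurable N" and "\<And>x. \<bar>f x\<bar> \<le> B"
  shows "(\<integral>x. f x \<partial>mix_measure t P Q) = t * (\<integral>x. f x \<partial>P) + (1 - t) * (\<integral>x. f x \<partial>Q)"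
proof -
  have "(\<integral>x. f x \<partial>mix_measure t P Q) = (\<integral>b. (\<integral>x. f x \<partial>(if b then P else Q)) \<partial>measure_pmf (bernoulli_pmf t))"
    unfolding mix_measure_def
    using assms mix_measure_kernel P Q
    by (intro integral_bind[where B'=1])
       (auto simp: prob_space.emeasure_space_1 prob_space.finite_measure[OF prob_space_measure_pmf])
  then show ?thesis
    using t by (simp add: mult.commute)
qed

lemma distr_mix_measure:
  assumes f: "f \<in> N \<rightarrow>\<^sub>M R" and "distr P R f = D" and "distr Q R f = D"
  shows "distr (mix_measure t P Q) R f = D"
proof -
  have "distr (mix_measure t P Q) R f = measure_pmf (bernoulli_pmf t) \<bind> (\<lambda>b. distr (if b then P else Q) R f)"
    unfolding mix_measure_def by (rule distr_bind[OF mix_measure_kernel _ f]) simp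
  also have "\<dots> = measure_pmf (bernoulli_pmf t) \<bind> (\<lambda>_. D)"
    using assms(2,3) by (intro bind_cong) auto
  also have "\<dots> = D"
  proof (rule bind_const'[OF prob_space_measure_pmf prob_space_imp_subprob_space])
    have "f \<in> P \<rightarrow>\<^sub>M R"
      using f by (simp add: measurable_cong_sets[OF P(2) refl])
    then show "prob_space D"
      using assms(2) P(1) by (auto intro: prob_space.prob_space_distr)
  qed
  finally show ?thesis .
qed

end

lemma mix_measure_in_couplings:
  fixes \<mu> :: "'x::topological_space measure" and \<nu> :: "'y::topological_space measure"
  assumes "\<pi>\<^sub>1 \<in> couplings \<mu> \<nu>" "\<pi>\<^sub>2 \<in> couplings \<mu> \<nu>" "0 \<le> t" "t \<le> 1"
  shows "mix_measure t \<pi>\<^sub>1 \<pi>\<^sub>2 \<in> couplings \<mu> \<nu>"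
proof -
  have fst: "(fst :: 'x \<times> 'y \<Rightarrow> 'x) \<in> borel_measurable borel"
    and snd: "(snd :: 'x \<times> 'y \<Rightarrow> 'y) \<in> borel_measurable borel"
    by (intro borel_measurable_continuous_onI continuous_intros)+
  have \<pi>: "prob_space \<pi>\<^sub>1" "sets \<pi>\<^sub>1 = sets borel" "prob_space \<pi>\<^sub>2" "sets \<pi>\<^sub>2 = sets borel"
    using assms(1,2) by (auto simp: couplings_def)
  show ?thesis
    using assms prob_space_mix_measure[OF assms(3,4) \<pi>] sets_mix_measure[OF assms(3,4) \<pi>]
      distr_mix_measure[OF assms(3,4) \<pi> fst] distr_mix_measure[OF assms(3,4) \<pi> snd]
    by (auto simp: couplings_def)
qed

section \<open>Integrating a continuous kernel\<close>

context
  fixes S :: "'z::topological_space \<Rightarrow> 'w::topological_space \<Rightarrow> real"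
  assumes compact_UNIV: "compact (UNIV :: 'z set)"
    and S_cont: "continuous_on UNIV (\<lambda>(z, w). S z w)"
begin

lemma continuous_on_kernel_section: "continuous_on UNIV (\<lambda>z. S z w)"
proof -
  have "continuous_on UNIV (\<lambda>z. (\<lambda>(z, w). S z w) (z, w))"
    by (intro continuous_on_compose2[OF S_cont] continuous_intros) auto
  then show ?thesis
    by simp
qed

lemma bounded_kernel_section: "\<exists>B. \<forall>z. \<bar>S z w\<bar> \<le> B"
  using compact_imp_bounded[OF compact_continuous_image[OF continuous_on_kernel_section compact_UNIV]]
  by (auto simp: bounded_real)

lemma integrable_kernel_section:
  assumes "prob_space P" and "sets P = sets borel"
  shows "integrable P (\<lambda>z. S z w)"
proof -
  obtain B where "\<And>z. \<bar>S z w\<bar> \<le> B"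
    using bounded_kernel_section by blast
  moreover have "(\<lambda>z. S z w) \<in> borel_measurable P"
    using borel_measurable_continuous_onI[OF continuous_on_kernel_section]
    by (simp add: measurable_cong_sets[OF assms(2) refl])
  ultimately show ?thesis
    using assms(1) by (intro finite_measure.integrable_const_bound[where B=B] prob_space.finite_measure) auto
qed

lemma continuous_on_S_pi:
  assumes P: "prob_space P" and sets_P: "sets P = sets borel"
  shows "continuous_on UNIV (S_pi S P)"
proof -
  have "(S_pi S P \<longlongrightarrow> S_pi S P w\<^sub>0) (at w\<^sub>0)" for w\<^sub>0
    unfolding tendsto_iff
  proof (intro allI impI)
    fix e :: real assume "0 < e"
    have "continuous_on (UNIV \<times> UNIV) (\<lambda>(w, z). S z w)"
      using continuous_on_compose2[OF S_cont, of _ prod.swap] by (auto intro: continuous_intros)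
    then obtain W where W: "w\<^sub>0 \<in> W" "open W"
      and near: "\<forall>w\<in>W \<inter> UNIV. \<forall>z\<in>UNIV. dist (S z w) (S z w\<^sub>0) \<le> e / 2"
      using continuous_on_prod_compactE[OF _ compact_UNIV, of UNIV "\<lambda>(w, z). S z w" w\<^sub>0 "e / 2"] \<open>0 < e\<close>
      by auto
    have "dist (S_pi S P w) (S_pi S P w\<^sub>0) < e" if "w \<in> W" for w
    proof -
      have "\<bar>S_pi S P w - S_pi S P w\<^sub>0\<bar> = \<bar>\<integral>z. S z w - S z w\<^sub>0 \<partial>P\<bar>"
        unfolding S_pi_def using integrable_kernel_section[OF P sets_P] by simp
      also have "\<dots> \<le> (\<integral>z. \<bar>S z w - S z w\<^sub>0\<bar> \<partial>P)"
        by (rule integral_abs_bound)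
      also have "\<dots> \<le> (\<integral>z. e / 2 \<partial>P)"
        using near that integrable_kernel_section[OF P sets_P] prob_space.finite_measure[OF P]
        by (intro integral_mono finite_measure.integrable_const) (auto simp: dist_real_def)
      also have "\<dots> = e / 2"
        using prob_space.prob_space[OF P] by simp
      finally show ?thesis
        using \<open>0 < e\<close> by (simp add: dist_real_def)
    qed
    then show "\<forall>\<^sub>F w in at w\<^sub>0. dist (S_pi S P w) (S_pi S P w\<^sub>0) < e"
      using W by (auto simp: eventually_at_topological)
  qed
  then show ?thesis
    by (simp add: continuous_on_def)
qed

lemma S_pi_mix_measure:
  assumes "0 \<le> t" "t \<le> 1" "prob_space P" "sets P = sets borel" "prob_space Q" "sets Q = sets borel"
  shows "S_pi S (mix_measure t P Q) = (\<lambda>w. t * S_pi S P w + (1 - t) * S_pi S Q w)"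
proof
  fix w
  obtain B where "\<And>z. \<bar>S z w\<bar> \<le> B"
    using bounded_kernel_section by blast
  then show "S_pi S (mix_measure t P Q) w = t * S_pi S P w + (1 - t) * S_pi S Q w"
    unfolding S_pi_def
    by (intro integral_mix_measure[OF assms] borel_measurable_continuous_onI continuous_on_kernel_section)
qed

end

lemma L2_convex_set_S_pi_couplings:
  fixes \<mu> :: "'x::topological_space measure" and \<nu> :: "'y::topological_space measure"
    and \<omega> :: "'w::topological_space measure" and S :: "'x \<times> 'y \<Rightarrow> 'w \<Rightarrow> real"
  assumes compact_Z: "compact (UNIV :: ('x \<times> 'y) set)" and sets_\<omega>: "sets \<omega> = sets borel"
    and S_cont: "continuous_on UNIV (\<lambda>(z, w). S z w)"
    and S_pi_L2: "\<And>\<pi>. \<pi> \<in> couplings \<mu> \<nu> \<Longrightarrow> integrable \<omega> (\<lambda>w. (S_pi S \<pi> w)\<^sup>2)"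
  shows "L2_convex_set \<omega> (S_pi S ` couplings \<mu> \<nu>)"
proof
  fix g assume "g \<in> S_pi S ` couplings \<mu> \<nu>"
  then obtain \<pi> where \<pi>: "\<pi> \<in> couplings \<mu> \<nu>" and g: "g = S_pi S \<pi>"
    by blast
  then have "g \<in> borel_measurable \<omega>"
    using continuous_on_S_pi[OF compact_Z S_cont]
    by (auto simp: couplings_def measurable_cong_sets[OF sets_\<omega> refl] intro: borel_measurable_continuous_onI)
  with S_pi_L2[OF \<pi>] show "square_integrable \<omega> g"
    by (simp add: square_integrable_def g)
next
  fix g h and t :: real
  assume "g \<in> S_pi S ` couplings \<mu> \<nu>" "h \<in> S_pi S ` couplings \<mu> \<nu>" and t: "0 \<le> t" "t \<le> 1"
  then obtain \<pi>\<^sub>1 \<pi>\<^sub>2 where \<pi>: "\<pi>\<^sub>1 \<in> couplings \<mu> \<nu>" "\<pi>\<^sub>2 \<in> couplings \<mu> \<nu>"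
    and gh: "g = S_pi S \<pi>\<^sub>1" "h = S_pi S \<pi>\<^sub>2"
    by blast
  have "(\<lambda>x. t * g x + (1 - t) * h x) = S_pi S (mix_measure t \<pi>\<^sub>1 \<pi>\<^sub>2)"
    using \<pi> t S_pi_mix_measure[OF compact_Z S_cont] by (auto simp: couplings_def gh)
  moreover have "mix_measure t \<pi>\<^sub>1 \<pi>\<^sub>2 \<in> couplings \<mu> \<nu>"
    using \<pi> t by (rule mix_measure_in_couplings)
  ultimately show "(\<lambda>x. t * g x + (1 - t) * h x) \<in> S_pi S ` couplings \<mu> \<nu>"
    by simp
qed

theorem mainTheorem7:
  fixes \<mu> :: "'x::polish_space measure" and \<nu> :: "'y::polish_space measure"
    and \<omega> :: "'w::metric_space measure"
    and S :: "('x \<times> 'y) \<Rightarrow> 'w \<Rightarrow> real"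
  assumes "compact (UNIV :: 'x set)" and "compact (UNIV :: 'y set)"
    and "prob_space \<mu>" and "sets \<mu> = sets borel"
    and "prob_space \<nu>" and "sets \<nu> = sets borel"
    and "sets \<omega> = sets borel"
    and "continuous_on UNIV (\<lambda>(z, w). S z w)"
    and "\<And>\<pi>. \<pi> \<in> couplings \<mu> \<nu> \<Longrightarrow> integrable \<omega> (\<lambda>w. (S_pi S \<pi> w)\<^sup>2)"
  shows "(INF \<pi>\<in>couplings \<mu> \<nu>. SUP f\<in>L2_unit_ball \<omega>. ereal (L2_inner \<omega> (S_pi S \<pi>) f))
       = (SUP f\<in>L2_unit_ball \<omega>. INF \<pi>\<in>couplings \<mu> \<nu>. ereal (L2_inner \<omega> (S_pi S \<pi>) f))"
proof -
  have "compact (UNIV :: ('x \<times> 'y) set)"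
    using compact_Times[OF assms(1,2)] by simp
  then have "L2_convex_set \<omega> (S_pi S ` couplings \<mu> \<nu>)"
    using assms(7-9) by (rule L2_convex_set_S_pi_couplings)
  from L2_convex_set.INF_SUP_eq_SUP_INF_L2_inner[OF this] show ?thesis
    by (simp add: image_image)
qed

end
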